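(* Let $G$ be countably infinite and let $L:G\to[0,\infty)$ be proper. (1) If $G$ has polynomial H-growth with respect to $L$, then there exists $s_0>0$ such that $(G,\sigma)$ is $(1+L)^{s_0}$-decaying for every normalized 2-cocycle $\sigma$ (in particular, if $L$ is a length function, $G$ has the $\sigma$-twisted rapid decay property w.r.t. $L$). (2) If $G$ has subexponential H-growth with respect to $L$, then $(G,\sigma)$ is $a^L$-decaying for every $a>1$ and every normalized 2-cocycle $\sigma$.
   Context: $G$ is a discrete group, $\sigma:G\times G\to\mathbb{T}$ a normalized 2-cocycle ($\sigma(g,h)\sigma(gh,k)=\sigma(h,k)\sigma(g,hk)$, $\sigma(g,e)=\sigma(e,g)=1$), $\Lambda_\sigma(g)$ the unitary on $\ell^2(G)$ with $(\Lambda_\sigma(g)\xi)(h)=\sigma(g,g^{-1}h)\xi(g^{-1}h)$, $\lambda=\Lambda_1$, $C^*_r(G,\sigma)$ the operator-norm closed $*$-algebra generated by $\Lambda_\sigma(G)$. $\mathcal{K}(G)$ = finitely supported functions, $\pi_\sigma(f)=\sum_g f(g)\Lambda_\sigma(g)$, $\pi_\lambda=\pi_1$. A function $L:G\to[0,\infty)$ is proper if $L^{-1}([0,t])$ is finite for all $t\ge0$. For finite nonempty $E\subseteq G$, the Haagerup content is $c(E)=\sup\{\|\pi_\lambda(f)\|\mid f\in\mathcal{K}(G),\ \mathrm{supp}f\subseteq E,\ \|f\|_2=1\}$. With $B_{r,L}=\{g\in G\mid L(g)\le r\}$: $G$ has polynomial H-growth w.r.t. $L$ if there are $K,p>0$ with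 $c(B_{r,L})\le K(1+r)^p$ for all $r\ge0$; $G$ has subexponential H-growth w.r.t. $L$ if for every $b>1$ there is $r_0$ with $c(B_{r,L})<b^r$ for all $r\ge r_0$. For $\kappa:G\to[1,\infty)$, $\|\xi\|_{2,\kappa}=\|\xi\kappa\|_2$; $(G,\sigma)$ is $\kappa$-decaying if $f\mapsto\pi_\sigma(f)$ is bounded from $(\mathcal{K}(G),\|\cdot\|_{2,\kappa})$ to $C^*_r(G,\sigma)$ with operator norm. A length function satisfies $L(e)=0$, $L(g^{-1})=L(g)$, $L(gh)\le L(g)+L(h)$; $G$ has the $\sigma$-twisted rapid decay property w.r.t. a length function $L$ if $(G,\sigma)$ is $(1+L)^{s}$-decaying for some $s>0$. *)

theory Defs
  imports "HOL-Analysis.Analysis"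
begin

text \<open>The discrete group G is a type of class group_add (written additively,
  NOT assumed commutative): g * h is g + h, g^-1 is -g, e is 0.
  Vectors of l^2(G) are functions 'g \<Rightarrow> complex.\<close>

definition normalized_2cocycle :: "('g::group_add \<Rightarrow> 'g \<Rightarrow> complex) \<Rightarrow> bool" where
  "normalized_2cocycle \<sigma> \<longleftrightarrow>
     (\<forall>g h. cmod (\<sigma> g h) = 1) \<and>
     (\<forall>g h k. \<sigma> g h * \<sigma> (g + h) k = \<sigma> h k * \<sigma> g (h + k)) \<and>
     (\<forall>g. \<sigma> g 0 = 1 \<and> \<sigma> 0 g = 1)"

definition sq_summable :: "('g \<Rightarrow> complex) \<Rightarrow> bool" where
  "sq_summable \<xi> \<longleftrightarrow> (\<lambda>g. (cmod (\<xi> g))\<^sup>2) summable_on UNIV"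

definition l2norm :: "('g \<Rightarrow> complex) \<Rightarrow> real" where
  "l2norm \<xi> = sqrt (\<Sum>\<^sub>\<infinity>g. (cmod (\<xi> g))\<^sup>2)"

definition fin_supp :: "('g \<Rightarrow> complex) \<Rightarrow> bool" where
  "fin_supp f \<longleftrightarrow> finite {g. f g \<noteq> 0}"

definition Lambda_tw :: "('g::group_add \<Rightarrow> 'g \<Rightarrow> complex) \<Rightarrow> 'g \<Rightarrow> ('g \<Rightarrow> complex) \<Rightarrow> ('g \<Rightarrow> complex)" where
  "Lambda_tw \<sigma> g \<xi> = (\<lambda>h. \<sigma> g (- g + h) * \<xi> (- g + h))"

definition pi_tw :: "('g::group_add \<Rightarrow> 'g \<Rightarrow> complex) \<Rightarrow> ('g \<Rightarrow> complex) \<Rightarrow> ('g \<Rightarrow> complex) \<Rightarrow> ('g \<Rightarrow> complex)" where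
  "pi_tw \<sigma> f \<xi> = (\<lambda>h. \<Sum>g\<in>{g. f g \<noteq> 0}. f g * Lambda_tw \<sigma> g \<xi> h)"

definition trivial_cocycle :: "'g \<Rightarrow> 'g \<Rightarrow> complex" where
  "trivial_cocycle g h = 1"

definition op_norm :: "(('g \<Rightarrow> complex) \<Rightarrow> ('g \<Rightarrow> complex)) \<Rightarrow> real" where
  "op_norm T = Sup {l2norm (T \<xi>) | \<xi>. sq_summable \<xi> \<and> l2norm \<xi> \<le> 1}"

text \<open>Haagerup content c(E) (meaningful for finite nonempty E).\<close>
definition haagerup_content :: "'g::group_add set \<Rightarrow> real" where
  "haagerup_content E = Sup {op_norm (pi_tw trivial_cocycle f) | f.
       fin_supp f \<and> {g. f g \<noteq> 0} \<subseteq> E \<and> l2norm f = 1}"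

definition ball_L :: "('g \<Rightarrow> real) \<Rightarrow> real \<Rightarrow> 'g set" where
  "ball_L L r = {g. L g \<le> r}"

definition proper_fun :: "('g \<Rightarrow> real) \<Rightarrow> bool" where
  "proper_fun L \<longleftrightarrow> (\<forall>t\<ge>0. finite {g. L g \<le> t})"

text \<open>c(B_{r,L}) is only considered when B_{r,L} is nonempty (c is only defined
  for nonempty sets).\<close>
definition poly_H_growth :: "('g::group_add \<Rightarrow> real) \<Rightarrow> bool" where
  "poly_H_growth L \<longleftrightarrow> (\<exists>K>0. \<exists>p>0. \<forall>r\<ge>0. ball_L L r \<noteq> {} \<longrightarrow>
      haagerup_content (ball_L L r) \<le> K * (1 + r) powr p)"

definition subexp_H_growth :: "('g::group_add \<Rightarrow> real) \<Rightarrow> bool" where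
  "subexp_H_growth L \<longleftrightarrow> (\<forall>b>1. \<exists>r0. \<forall>r\<ge>r0. ball_L L r \<noteq> {} \<longrightarrow>
      haagerup_content (ball_L L r) < b powr r)"

definition decaying :: "('g::group_add \<Rightarrow> 'g \<Rightarrow> complex) \<Rightarrow> ('g \<Rightarrow> real) \<Rightarrow> bool" where
  "decaying \<sigma> \<kappa> \<longleftrightarrow> (\<exists>C. \<forall>f. fin_supp f \<longrightarrow>
      op_norm (pi_tw \<sigma> f) \<le> C * l2norm (\<lambda>g. f g * complex_of_real (\<kappa> g)))"

end

theory Submission
  imports Defs
begin

(*
  Split a finitely supported f into the layers A_n = {g. floor (L g) = n}, which lie in the
  finite balls B_(n+1). Since |sigma| <= 1, |pi_sigma(f) xi| is dominated pointwise by the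
  untwisted convolution |f| * |xi|, so the cocycle drops out; the layer |f| 1_(A_n) then
  contributes at most c(B_(n+1)) ||f 1_(A_n)||_2 <= c(B_(n+1)) ||f kappa||_2 / w(n) whenever
  kappa >= w(n) on A_n. Summing over n, (G,sigma) is kappa-decaying as soon as
  sum_n c(B_(n+1)) / w(n) < infinity. Polynomial H-growth makes this series converge for
  w(n) = (1+n)^(p+2), subexponential H-growth for w(n) = a^n.
*)

lemma l2norm_finite_support:
  assumes "finite S" "\<And>x. x \<notin> S \<Longrightarrow> f x = 0"
  shows "sq_summable f" "l2norm f = L2_set (\<lambda>x. cmod (f x)) S"
proof -
  have "(\<lambda>x. (cmod (f x))\<^sup>2) summable_on UNIV \<longleftrightarrow> (\<lambda>x. (cmod (f x))\<^sup>2) summable_on S"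
    by (rule summable_on_cong_neutral) (use assms in auto)
  then show "sq_summable f"
    using assms(1) by (simp add: sq_summable_def)
  have "(\<Sum>\<^sub>\<infinity>x. (cmod (f x))\<^sup>2) = (\<Sum>\<^sub>\<infinity>x\<in>S. (cmod (f x))\<^sup>2)"
    by (rule infsum_cong_neutral) (use assms in auto)
  then show "l2norm f = L2_set (\<lambda>x. cmod (f x)) S"
    using assms(1) by (simp add: l2norm_def L2_set_def)
qed

lemma L2_set_le_l2norm:
  assumes "sq_summable \<xi>"
  shows "L2_set (\<lambda>x. cmod (\<xi> x)) F \<le> l2norm \<xi>"
proof (cases "finite F")
  case True
  have "(\<Sum>x\<in>F. (cmod (\<xi> x))\<^sup>2) \<le> (\<Sum>\<^sub>\<infinity>x. (cmod (\<xi> x))\<^sup>2)"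
    by (rule finite_sum_le_infsum) (use assms True in \<open>auto simp: sq_summable_def\<close>)
  then show ?thesis
    unfolding L2_set_def l2norm_def by simp
qed (simp add: l2norm_def infsum_nonneg)

lemma l2norm_le_if_L2_set_le:
  assumes "\<And>F. finite F \<Longrightarrow> L2_set (\<lambda>x. cmod (\<xi> x)) F \<le> M"
  shows "sq_summable \<xi>" "l2norm \<xi> \<le> M"
proof -
  have "0 \<le> M"
    using assms[of "{}"] by simp
  have partial_sums: "(\<Sum>x\<in>F. (cmod (\<xi> x))\<^sup>2) \<le> M\<^sup>2" if "finite F" for F
    using assms[OF that] unfolding L2_set_def by (rule sqrt_le_D)
  have summable: "(\<lambda>x. (cmod (\<xi> x))\<^sup>2) summable_on UNIV"
    by (rule nonneg_bdd_above_summable_on) (use partial_sums in \<open>auto intro!: bdd_aboveI\<close>)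
  then show "sq_summable \<xi>"
    by (simp add: sq_summable_def)
  have "(\<Sum>\<^sub>\<infinity>x. (cmod (\<xi> x))\<^sup>2) \<le> M\<^sup>2"
    by (rule infsum_le_finite_sums[OF summable]) (use partial_sums in auto)
  then show "l2norm \<xi> \<le> M"
    unfolding l2norm_def using \<open>0 \<le> M\<close> by (rule real_le_lsqrt[rotated])
qed

lemma L2_set_sum_le: "L2_set (\<lambda>x. \<Sum>n\<in>N. u n x) F \<le> (\<Sum>n\<in>N. L2_set (u n) F)"
proof (induction N rule: infinite_finite_induct)
  case (insert n N)
  have "L2_set (\<lambda>x. \<Sum>m\<in>insert n N. u m x) F = L2_set (\<lambda>x. u n x + (\<Sum>m\<in>N. u m x)) F"
    using insert.hyps by simp
  also have "\<dots> \<le> L2_set (u n) F + L2_set (\<lambda>x. \<Sum>m\<in>N. u m x) F"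
    by (rule L2_set_triangle_ineq)
  also have "\<dots> \<le> L2_set (u n) F + (\<Sum>m\<in>N. L2_set (u m) F)"
    using insert.IH by simp
  finally show ?case
    using insert.hyps by simp
qed (simp_all add: L2_set_def)

lemma L2_set_translate_le_l2norm:
  fixes \<xi> :: "'g::group_add \<Rightarrow> complex"
  assumes "sq_summable \<xi>"
  shows "L2_set (\<lambda>x. cmod (\<xi> (- g + x))) F \<le> l2norm \<xi>"
proof -
  have "L2_set (\<lambda>x. cmod (\<xi> (- g + x))) F = L2_set (\<lambda>x. cmod (\<xi> x)) ((+) (- g) ` F)"
    unfolding L2_set_def by (subst sum.reindex) (auto simp: inj_on_def)
  also have "\<dots> \<le> l2norm \<xi>"
    by (rule L2_set_le_l2norm[OF assms])
  finally show ?thesis .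
qed

lemma norm_le_l2norm:
  assumes "fin_supp f"
  shows "cmod (f g) \<le> l2norm f"
proof (cases "f g = 0")
  case False
  have "finite {g. f g \<noteq> 0}"
    using assms by (simp add: fin_supp_def)
  with False have "cmod (f g) \<le> L2_set (\<lambda>x. cmod (f x)) {g. f g \<noteq> 0}"
    by (intro member_le_L2_set) auto
  also have "\<dots> = l2norm f"
    using \<open>finite {g. f g \<noteq> 0}\<close> by (intro l2norm_finite_support(2)[symmetric]) auto
  finally show ?thesis .
qed (simp add: l2norm_def infsum_nonneg)

lemma L2_set_le_weighted_l2norm:
  assumes "sq_summable (\<lambda>g. f g * complex_of_real (\<kappa> g))" "0 < c" "\<And>g. g \<in> A \<Longrightarrow> c \<le> \<kappa> g"
  shows "L2_set (\<lambda>g. cmod (f g)) A \<le> l2norm (\<lambda>g. f g * complex_of_real (\<kappa> g)) / c"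
proof -
  have "L2_set (\<lambda>g. cmod (f g)) A * c \<le> L2_set (\<lambda>g. cmod (f g * complex_of_real (\<kappa> g))) A"
    unfolding L2_set_left_distrib[OF less_imp_le[OF assms(2)]] using assms(2,3)
    by (intro L2_set_mono) (auto simp: norm_mult intro!: mult_left_mono order_trans[OF _ abs_ge_self])
  also have "\<dots> \<le> l2norm (\<lambda>g. f g * complex_of_real (\<kappa> g))"
    by (rule L2_set_le_l2norm[OF assms(1)])
  finally show ?thesis
    using assms(2) by (simp add: pos_le_divide_eq)
qed

lemma op_norm_le:
  fixes T :: "('a \<Rightarrow> complex) \<Rightarrow> 'a \<Rightarrow> complex"
  assumes "\<And>\<xi> F. sq_summable \<xi> \<Longrightarrow> l2norm \<xi> \<le> 1 \<Longrightarrow> finite F \<Longrightarrow>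
      L2_set (\<lambda>x. cmod (T \<xi> x)) F \<le> B"
  shows "op_norm T \<le> B"
  unfolding op_norm_def
proof (rule cSup_least)
  have "sq_summable (\<lambda>_::'a. 0::complex)" "l2norm (\<lambda>_::'a. 0::complex) = 0"
    using l2norm_finite_support[of "{}" "\<lambda>_::'a. 0::complex"] by simp_all
  then have "l2norm (T (\<lambda>_. 0)) \<in> {l2norm (T \<xi>) | \<xi>. sq_summable \<xi> \<and> l2norm \<xi> \<le> 1}"
    by (auto intro!: exI[of _ "\<lambda>_. 0"])
  then show "{l2norm (T \<xi>) | \<xi>. sq_summable \<xi> \<and> l2norm \<xi> \<le> 1} \<noteq> {}"
    by blast
qed (use assms l2norm_le_if_L2_set_le(2) in blast)

lemma L2_set_le_op_norm:
  assumes bounded: "\<And>\<xi>. sq_summable \<xi> \<Longrightarrow> sq_summable (T \<xi>) \<and> l2norm (T \<xi>) \<le> B * l2norm \<xi>"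
    and "sq_summable \<xi>" "l2norm \<xi> \<le> 1"
  shows "L2_set (\<lambda>x. cmod (T \<xi> x)) F \<le> op_norm T"
proof -
  have "l2norm (T \<xi>') \<le> \<bar>B\<bar>" if "sq_summable \<xi>'" "l2norm \<xi>' \<le> 1" for \<xi>'
  proof -
    have "0 \<le> l2norm \<xi>'"
      by (simp add: l2norm_def infsum_nonneg)
    then have "B * l2norm \<xi>' \<le> \<bar>B\<bar> * l2norm \<xi>'"
      by (intro mult_right_mono) auto
    also have "\<dots> \<le> \<bar>B\<bar>"
      using that(2) \<open>0 \<le> l2norm \<xi>'\<close> by (intro mult_left_le) auto
    finally have "B * l2norm \<xi>' \<le> \<bar>B\<bar>" .
    then show ?thesis
      using bounded[OF that(1)] by linarith
  qed
  then have "l2norm (T \<xi>) \<le> op_norm T"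
    unfolding op_norm_def using assms(2,3) by (intro cSup_upper bdd_aboveI[of _ "\<bar>B\<bar>"]) auto
  moreover have "L2_set (\<lambda>x. cmod (T \<xi> x)) F \<le> l2norm (T \<xi>)"
    using bounded assms(2) by (intro L2_set_le_l2norm) blast
  ultimately show ?thesis
    by linarith
qed

lemma norm_pi_tw_le_convolution:
  assumes "\<And>g h. cmod (\<sigma> g h) \<le> 1"
  shows "cmod (pi_tw \<sigma> f \<xi> x) \<le> (\<Sum>g\<in>{g. f g \<noteq> 0}. cmod (f g) * cmod (\<xi> (- g + x)))"
proof -
  have "cmod (pi_tw \<sigma> f \<xi> x) \<le> (\<Sum>g\<in>{g. f g \<noteq> 0}. cmod (f g * Lambda_tw \<sigma> g \<xi> x))"
    unfolding pi_tw_def by (rule norm_sum)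
  also have "\<dots> \<le> (\<Sum>g\<in>{g. f g \<noteq> 0}. cmod (f g) * cmod (\<xi> (- g + x)))"
    using assms unfolding Lambda_tw_def norm_mult
    by (intro sum_mono mult_left_mono mult_left_le_one_le) auto
  finally show ?thesis .
qed

lemma pi_tw_bounded_by_l1:
  assumes "\<And>g h. cmod (\<sigma> g h) \<le> 1" "fin_supp f" "sq_summable \<xi>"
  shows "sq_summable (pi_tw \<sigma> f \<xi>)"
    and "l2norm (pi_tw \<sigma> f \<xi>) \<le> (\<Sum>g\<in>{g. f g \<noteq> 0}. cmod (f g)) * l2norm \<xi>"
proof -
  let ?S = "{g. f g \<noteq> 0}"
  have "L2_set (\<lambda>x. cmod (pi_tw \<sigma> f \<xi> x)) F \<le> (\<Sum>g\<in>?S. cmod (f g)) * l2norm \<xi>" for F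
  proof -
    have "L2_set (\<lambda>x. cmod (pi_tw \<sigma> f \<xi> x)) F
        \<le> L2_set (\<lambda>x. \<Sum>g\<in>?S. cmod (f g) * cmod (\<xi> (- g + x))) F"
      using norm_pi_tw_le_convolution[OF assms(1)] by (intro L2_set_mono) auto
    also have "\<dots> \<le> (\<Sum>g\<in>?S. L2_set (\<lambda>x. cmod (f g) * cmod (\<xi> (- g + x))) F)"
      by (rule L2_set_sum_le)
    also have "\<dots> = (\<Sum>g\<in>?S. cmod (f g) * L2_set (\<lambda>x. cmod (\<xi> (- g + x))) F)"
      by (simp add: L2_set_right_distrib)
    also have "\<dots> \<le> (\<Sum>g\<in>?S. cmod (f g) * l2norm \<xi>)"
      by (intro sum_mono mult_left_mono L2_set_translate_le_l2norm assms) auto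
    finally show ?thesis
      by (simp add: sum_distrib_right)
  qed
  then show "sq_summable (pi_tw \<sigma> f \<xi>)" "l2norm (pi_tw \<sigma> f \<xi>) \<le> (\<Sum>g\<in>?S. cmod (f g)) * l2norm \<xi>"
    by (blast intro: l2norm_le_if_L2_set_le)+
qed

lemma op_norm_pi_tw_le_l1:
  assumes "\<And>g h. cmod (\<sigma> g h) \<le> 1" "fin_supp f"
  shows "op_norm (pi_tw \<sigma> f) \<le> (\<Sum>g\<in>{g. f g \<noteq> 0}. cmod (f g))"
proof (rule op_norm_le)
  fix \<xi> :: "'a \<Rightarrow> complex" and F
  assume \<xi>: "sq_summable \<xi>" "l2norm \<xi> \<le> 1"
  have "L2_set (\<lambda>x. cmod (pi_tw \<sigma> f \<xi> x)) F \<le> l2norm (pi_tw \<sigma> f \<xi>)"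
    by (intro L2_set_le_l2norm pi_tw_bounded_by_l1 assms \<xi>)
  also have "\<dots> \<le> (\<Sum>g\<in>{g. f g \<noteq> 0}. cmod (f g)) * l2norm \<xi>"
    by (intro pi_tw_bounded_by_l1 assms \<xi>)
  also have "\<dots> \<le> (\<Sum>g\<in>{g. f g \<noteq> 0}. cmod (f g))"
    using \<xi>(2) by (intro mult_left_le sum_nonneg) auto
  finally show "L2_set (\<lambda>x. cmod (pi_tw \<sigma> f \<xi> x)) F \<le> (\<Sum>g\<in>{g. f g \<noteq> 0}. cmod (f g))" .
qed

lemma op_norm_le_haagerup_content:
  assumes "finite E" "fin_supp f" "{g. f g \<noteq> 0} \<subseteq> E" "l2norm f = 1"
  shows "op_norm (pi_tw trivial_cocycle f) \<le> haagerup_content E"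
  unfolding haagerup_content_def
proof (rule cSup_upper)
  show "op_norm (pi_tw trivial_cocycle f) \<in> {op_norm (pi_tw trivial_cocycle f) | f.
       fin_supp f \<and> {g. f g \<noteq> 0} \<subseteq> E \<and> l2norm f = 1}"
    using assms by blast
  have bound: "op_norm (pi_tw trivial_cocycle f') \<le> card E"
    if f': "fin_supp f'" "{g. f' g \<noteq> 0} \<subseteq> E" "l2norm f' = 1" for f'
  proof -
    have "op_norm (pi_tw trivial_cocycle f') \<le> (\<Sum>g\<in>{g. f' g \<noteq> 0}. cmod (f' g))"
      using f' by (intro op_norm_pi_tw_le_l1) (auto simp: trivial_cocycle_def)
    also have "\<dots> \<le> (\<Sum>g\<in>{g. f' g \<noteq> 0}. 1)"
      using norm_le_l2norm[OF f'(1)] f'(3) by (intro sum_mono) auto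
    also have "\<dots> \<le> card E"
      using f'(2) assms(1) by (simp add: card_mono)
    finally show ?thesis .
  qed
  show "bdd_above {op_norm (pi_tw trivial_cocycle f) | f.
       fin_supp f \<and> {g. f g \<noteq> 0} \<subseteq> E \<and> l2norm f = 1}"
    by (rule bdd_aboveI[of _ "real (card E)"]) (use bound in blast)
qed

lemma norm_pi_tw_trivial_cocycle_nonneg:
  fixes \<xi> :: "'g::group_add \<Rightarrow> complex"
  assumes "finite T" "\<And>g. g \<in> T \<Longrightarrow> 0 \<le> a g"
  shows "cmod (pi_tw trivial_cocycle (\<lambda>g. if g \<in> T then complex_of_real (a g) else 0)
      (\<lambda>x. complex_of_real (cmod (\<xi> x))) x) = (\<Sum>g\<in>T. a g * cmod (\<xi> (- g + x)))"
proof -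
  have "pi_tw trivial_cocycle (\<lambda>g. if g \<in> T then complex_of_real (a g) else 0)
      (\<lambda>x. complex_of_real (cmod (\<xi> x))) x = complex_of_real (\<Sum>g\<in>T. a g * cmod (\<xi> (- g + x)))"
    unfolding pi_tw_def Lambda_tw_def trivial_cocycle_def using assms(1)
    by (subst sum.mono_neutral_left[of T]) (auto intro!: sum.cong)
  moreover have "0 \<le> (\<Sum>g\<in>T. a g * cmod (\<xi> (- g + x)))"
    using assms(2) by (intro sum_nonneg) auto
  ultimately show ?thesis
    by (simp only: norm_of_real abs_of_nonneg)
qed

lemma L2_set_convolution_le_haagerup_content:
  fixes \<xi> :: "'g::group_add \<Rightarrow> complex"
  assumes "finite E" "T \<subseteq> E" "\<And>g. g \<in> T \<Longrightarrow> 0 \<le> a g"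
    and "sq_summable \<xi>" "l2norm \<xi> \<le> 1"
  shows "L2_set (\<lambda>x. \<Sum>g\<in>T. a g * cmod (\<xi> (- g + x))) F \<le> haagerup_content E * L2_set a T"
proof -
  have "finite T"
    using assms(1,2) by (rule finite_subset[rotated])
  define s where "s = L2_set a T"
  show ?thesis
  proof (cases "s = 0")
    case True
    then have "\<forall>g\<in>T. a g = 0"
      using L2_set_eq_0_iff[OF \<open>finite T\<close>] by (simp add: s_def)
    then show ?thesis
      using True by (simp add: s_def L2_set_0')
  next
    case False
    then have "0 < s"
      using L2_set_nonneg[of a T] unfolding s_def by linarith
    \<comment> \<open>normalising a and passing to |\<xi>| turns the sum into an untwisted convolution\<close>
    define f where "f g = (if g \<in> T then complex_of_real (a g / s) else 0)" for g
    define \<eta> where "\<eta> x = complex_of_real (cmod (\<xi> x))" for x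
    have supp: "{g. f g \<noteq> 0} \<subseteq> T"
      by (auto simp: f_def)
    then have "fin_supp f"
      using \<open>finite T\<close> by (auto simp: fin_supp_def intro: finite_subset)
    have "l2norm f = L2_set (\<lambda>g. a g * (1 / s)) T"
      using \<open>finite T\<close> assms(3) \<open>0 < s\<close>
      by (subst l2norm_finite_support(2)[of T]) (auto simp: f_def norm_divide intro!: L2_set_cong)
    also have "\<dots> = 1"
      using L2_set_left_distrib[of "1 / s" a T] \<open>0 < s\<close> by (simp add: s_def)
    finally have "l2norm f = 1" .
    have \<eta>: "sq_summable \<eta>" "l2norm \<eta> \<le> 1"
      using assms(4,5) by (simp_all add: \<eta>_def sq_summable_def l2norm_def)
    have conv: "(\<Sum>g\<in>T. a g * cmod (\<xi> (- g + x))) = s * cmod (pi_tw trivial_cocycle f \<eta> x)" for x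
      using norm_pi_tw_trivial_cocycle_nonneg[of T "\<lambda>g. a g / s" \<xi> x] \<open>finite T\<close> assms(3) \<open>0 < s\<close>
      unfolding f_def[abs_def] \<eta>_def[abs_def] by (simp add: sum_divide_distrib[symmetric])
    have "L2_set (\<lambda>x. \<Sum>g\<in>T. a g * cmod (\<xi> (- g + x))) F
        = s * L2_set (\<lambda>x. cmod (pi_tw trivial_cocycle f \<eta> x)) F"
      using \<open>0 < s\<close> by (simp add: conv L2_set_right_distrib)
    also have "\<dots> \<le> s * op_norm (pi_tw trivial_cocycle f)"
      using \<open>0 < s\<close> \<eta> \<open>fin_supp f\<close> pi_tw_bounded_by_l1[of trivial_cocycle f]
      by (intro mult_left_mono L2_set_le_op_norm) (auto simp: trivial_cocycle_def)
    also have "\<dots> \<le> s * haagerup_content E"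
      using \<open>0 < s\<close> assms(1,2) supp \<open>fin_supp f\<close> \<open>l2norm f = 1\<close>
      by (intro mult_left_mono op_norm_le_haagerup_content) auto
    finally show ?thesis
      by (simp add: s_def mult.commute)
  qed
qed

lemma L2_set_pi_tw_le_layers:
  fixes f \<xi> :: "'g::group_add \<Rightarrow> complex" and \<nu> :: "'g \<Rightarrow> nat"
  assumes "\<And>g h. cmod (\<sigma> g h) \<le> 1" "fin_supp f"
    and "\<And>n. finite (E n)" "\<And>g. f g \<noteq> 0 \<Longrightarrow> g \<in> E (\<nu> g)"
    and "sq_summable \<xi>" "l2norm \<xi> \<le> 1"
  shows "L2_set (\<lambda>x. cmod (pi_tw \<sigma> f \<xi> x)) F
    \<le> (\<Sum>n\<in>\<nu> ` {g. f g \<noteq> 0}.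
          haagerup_content (E n) * L2_set (\<lambda>g. cmod (f g)) {g \<in> {g. f g \<noteq> 0}. \<nu> g = n})"
proof -
  let ?S = "{g. f g \<noteq> 0}"
  let ?conv = "\<lambda>A x. \<Sum>g\<in>A. cmod (f g) * cmod (\<xi> (- g + x))"
  have "finite ?S"
    using assms(2) by (simp add: fin_supp_def)
  have "L2_set (\<lambda>x. cmod (pi_tw \<sigma> f \<xi> x)) F \<le> L2_set (?conv ?S) F"
    using norm_pi_tw_le_convolution[OF assms(1)] by (intro L2_set_mono) auto
  also have "\<dots> = L2_set (\<lambda>x. \<Sum>n\<in>\<nu> ` ?S. ?conv {g \<in> ?S. \<nu> g = n} x) F"
    using \<open>finite ?S\<close> by (intro L2_set_cong refl sum.group[symmetric]) auto
  also have "\<dots> \<le> (\<Sum>n\<in>\<nu> ` ?S. L2_set (?conv {g \<in> ?S. \<nu> g = n}) F)"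
    by (rule L2_set_sum_le)
  also have "\<dots> \<le> (\<Sum>n\<in>\<nu> ` ?S. haagerup_content (E n) * L2_set (\<lambda>g. cmod (f g)) {g \<in> ?S. \<nu> g = n})"
    using assms by (intro sum_mono L2_set_convolution_le_haagerup_content) (auto dest: assms(4))
  finally show ?thesis .
qed

lemma decaying_if_summable_content:
  fixes L :: "'g::group_add \<Rightarrow> real"
  assumes \<sigma>: "\<And>g h. cmod (\<sigma> g h) \<le> 1" and "proper_fun L"
    and w: "\<And>n. 0 < w n" and \<kappa>: "\<And>g. w (nat \<lfloor>L g\<rfloor>) \<le> \<kappa> g"
    and h: "\<And>n. ball_L L (real n + 1) \<noteq> {} \<Longrightarrow> haagerup_content (ball_L L (real n + 1)) \<le> h n"
    and "\<And>n. 0 \<le> h n" and "summable (\<lambda>n. h n / w n)"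
  shows "decaying \<sigma> \<kappa>"
  unfolding decaying_def
proof (intro exI allI impI)
  fix f :: "'g \<Rightarrow> complex"
  assume "fin_supp f"
  define \<nu> where "\<nu> g = nat \<lfloor>L g\<rfloor>" for g
  define A where "A n = {g \<in> {g. f g \<noteq> 0}. \<nu> g = n}" for n
  define X where "X = l2norm (\<lambda>g. f g * complex_of_real (\<kappa> g))"
  have "0 \<le> X"
    by (simp add: X_def l2norm_def infsum_nonneg)
  have in_ball: "g \<in> ball_L L (real (\<nu> g) + 1)" for g
    unfolding ball_L_def \<nu>_def by simp linarith
  have layer: "L2_set (\<lambda>g. cmod (f g)) (A n) \<le> X / w n" for n
    unfolding X_def using \<open>fin_supp f\<close> w \<kappa>
    by (intro L2_set_le_weighted_l2norm l2norm_finite_support(1)[of "{g. f g \<noteq> 0}"])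
      (auto simp: fin_supp_def A_def \<nu>_def)
  show "op_norm (pi_tw \<sigma> f) \<le> suminf (\<lambda>n. h n / w n) * X"
  proof (rule op_norm_le)
    fix \<xi> :: "'g \<Rightarrow> complex" and F :: "'g set"
    assume \<xi>: "sq_summable \<xi>" "l2norm \<xi> \<le> 1"
    have "L2_set (\<lambda>x. cmod (pi_tw \<sigma> f \<xi> x)) F
        \<le> (\<Sum>n\<in>\<nu> ` {g. f g \<noteq> 0}. haagerup_content (ball_L L (real n + 1)) * L2_set (\<lambda>g. cmod (f g)) (A n))"
      unfolding A_def using \<sigma> \<open>fin_supp f\<close> \<xi> in_ball \<open>proper_fun L\<close>
      by (intro L2_set_pi_tw_le_layers) (auto simp: proper_fun_def ball_L_def)
    also have "\<dots> \<le> (\<Sum>n\<in>\<nu> ` {g. f g \<noteq> 0}. h n / w n * X)"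
    proof (rule sum_mono)
      fix n
      assume "n \<in> \<nu> ` {g. f g \<noteq> 0}"
      then have "ball_L L (real n + 1) \<noteq> {}"
        using in_ball by blast
      then have "haagerup_content (ball_L L (real n + 1)) * L2_set (\<lambda>g. cmod (f g)) (A n) \<le> h n * (X / w n)"
        using h layer \<open>0 \<le> h n\<close> by (intro mult_mono) auto
      then show "haagerup_content (ball_L L (real n + 1)) * L2_set (\<lambda>g. cmod (f g)) (A n) \<le> h n / w n * X"
        by simp
    qed
    also have "\<dots> \<le> suminf (\<lambda>n. h n / w n) * X"
      unfolding sum_distrib_right[symmetric] using \<open>0 \<le> X\<close> \<open>fin_supp f\<close> w assms(6,7)
      by (intro mult_right_mono sum_le_suminf) (auto simp: fin_supp_def intro: divide_nonneg_pos)
    finally show "L2_set (\<lambda>x. cmod (pi_tw \<sigma> f \<xi> x)) F \<le> suminf (\<lambda>n. h n / w n) * X" .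
  qed
qed

lemma norm_normalized_2cocycle: "normalized_2cocycle \<sigma> \<Longrightarrow> cmod (\<sigma> g h) \<le> 1"
  by (simp add: normalized_2cocycle_def)

lemma summable_powr_ratio:
  assumes "0 \<le> p"
  shows "summable (\<lambda>n. (2 + real n) powr p / (1 + real n) powr (p + 2))"
proof (rule summable_comparison_test')
  have "summable (\<lambda>n. real (Suc n) powr - 2)"
    using summable_Suc_iff[of "\<lambda>n. real n powr - 2"] by (simp add: summable_real_powr_iff)
  then show "summable (\<lambda>n. 2 powr p * real (Suc n) powr - 2)"
    by (rule summable_mult)
  fix n
  have "(2 + real n) powr p \<le> 2 powr p * (1 + real n) powr p"
    using assms by (subst powr_mult[symmetric]) (auto intro: powr_mono2)
  then have "(2 + real n) powr p / (1 + real n) powr (p + 2)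
      \<le> 2 powr p * ((1 + real n) powr p / (1 + real n) powr (p + 2))"
    by (auto intro: divide_right_mono)
  also have "\<dots> = 2 powr p * real (Suc n) powr - 2"
    by (simp add: powr_diff [symmetric] add.commute)
  finally show "norm ((2 + real n) powr p / (1 + real n) powr (p + 2)) \<le> 2 powr p * real (Suc n) powr - 2"
    by simp
qed

lemma decaying_if_poly_H_growth:
  fixes L :: "'g::group_add \<Rightarrow> real"
  assumes "\<And>g. 0 \<le> L g" "proper_fun L" "poly_H_growth L"
  shows "\<exists>s0>0. \<forall>\<sigma>. normalized_2cocycle \<sigma> \<longrightarrow> decaying \<sigma> (\<lambda>g. (1 + L g) powr s0)"
proof -
  obtain K p where "0 < K" "0 < p"
    and growth: "\<And>r. 0 \<le> r \<Longrightarrow> ball_L L r \<noteq> {} \<Longrightarrow> haagerup_content (ball_L L r) \<le> K * (1 + r) powr p"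
    using assms(3) unfolding poly_H_growth_def by blast
  define h where "h n = K * (2 + real n) powr p" for n :: nat
  define w where "w n = (1 + real n) powr (p + 2)" for n :: nat
  have summable: "summable (\<lambda>n. h n / w n)"
    using summable_mult[OF summable_powr_ratio[of p], of K] \<open>0 < p\<close> by (simp add: h_def w_def)
  have weight: "w (nat \<lfloor>L g\<rfloor>) \<le> (1 + L g) powr (p + 2)" for g
    unfolding w_def using assms(1)[of g] \<open>0 < p\<close> by (intro powr_mono2) auto
  have content: "haagerup_content (ball_L L (real n + 1)) \<le> h n" if "ball_L L (real n + 1) \<noteq> {}" for n
    using growth[OF _ that] by (simp add: h_def add.assoc)
  have "0 < w n" "0 \<le> h n" for n
    using \<open>0 < K\<close> by (simp_all add: w_def h_def)
  show ?thesis
  proof (intro exI[of _ "p + 2"] conjI allI impI)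
    show "0 < p + 2"
      using \<open>0 < p\<close> by simp
    fix \<sigma> :: "'g \<Rightarrow> 'g \<Rightarrow> complex"
    assume "normalized_2cocycle \<sigma>"
    from norm_normalized_2cocycle[OF this] assms(2) \<open>\<And>n. 0 < w n\<close> weight content \<open>\<And>n. 0 \<le> h n\<close> summable
    show "decaying \<sigma> (\<lambda>g. (1 + L g) powr (p + 2))"
      by (rule decaying_if_summable_content)
  qed
qed

lemma decaying_if_subexp_H_growth:
  fixes L :: "'g::group_add \<Rightarrow> real"
  assumes "\<And>g. 0 \<le> L g" "proper_fun L" "subexp_H_growth L" "1 < a" "normalized_2cocycle \<sigma>"
  shows "decaying \<sigma> (\<lambda>g. a powr L g)"
proof -
  define b where "b = sqrt a"
  have "1 < b" "b * b = a"
    using \<open>1 < a\<close> by (simp_all add: b_def)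
  moreover have "b < b * b"
    using \<open>1 < b\<close> by simp
  ultimately have "b < a"
    by simp
  obtain r0 where growth: "\<And>r. r0 \<le> r \<Longrightarrow> ball_L L r \<noteq> {} \<Longrightarrow> haagerup_content (ball_L L r) < b powr r"
    using assms(3) \<open>1 < b\<close> unfolding subexp_H_growth_def by blast
  \<comment> \<open>the finitely many radii below r0 are absorbed into h\<close>
  define h where "h n = (if r0 \<le> real n + 1 then b ^ Suc n
      else \<bar>haagerup_content (ball_L L (real n + 1))\<bar>)" for n :: nat
  have "eventually (\<lambda>n. h n / a ^ n = b * (b / a) ^ n) sequentially"
    unfolding eventually_sequentially
    by (intro exI[of _ "nat \<lceil>r0\<rceil>"]) (auto simp: h_def power_divide)
  moreover have "summable (\<lambda>n. b * (b / a) ^ n)"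
    using \<open>1 < b\<close> \<open>b < a\<close> by (intro summable_mult summable_geometric) auto
  ultimately have summable: "summable (\<lambda>n. h n / a ^ n)"
    using summable_cong[of "\<lambda>n. h n / a ^ n" "\<lambda>n. b * (b / a) ^ n"] by blast
  have weight: "a ^ nat \<lfloor>L g\<rfloor> \<le> a powr L g" for g
  proof -
    have "a ^ nat \<lfloor>L g\<rfloor> = a powr real (nat \<lfloor>L g\<rfloor>)"
      using \<open>1 < a\<close> by (simp add: powr_realpow)
    also have "\<dots> \<le> a powr L g"
      using assms(1)[of g] \<open>1 < a\<close> by (intro powr_mono) auto
    finally show ?thesis .
  qed
  have content: "haagerup_content (ball_L L (real n + 1)) \<le> h n" if "ball_L L (real n + 1) \<noteq> {}" for n
  proof (cases "r0 \<le> real n + 1")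
    case True
    have "b powr (real n + 1) = b ^ Suc n"
      using powr_realpow[of b "Suc n"] \<open>1 < b\<close> by (simp add: add.commute)
    then show ?thesis
      using growth[OF True that] True by (simp add: h_def)
  qed (simp add: h_def)
  have "0 < a ^ n" "0 \<le> h n" for n
    using \<open>1 < a\<close> \<open>1 < b\<close> by (simp_all add: h_def)
  from norm_normalized_2cocycle[OF assms(5)] assms(2) this(1) weight content this(2) summable
  show ?thesis
    by (rule decaying_if_summable_content)
qed

theorem theorem3p13:
  fixes L :: "'g::group_add \<Rightarrow> real"
  assumes "countable (UNIV :: 'g set)" and "infinite (UNIV :: 'g set)"
    and "\<forall>g. L g \<ge> 0" and "proper_fun L"
  shows "(poly_H_growth L \<longrightarrow>
            (\<exists>s0>0. \<forall>\<sigma>. normalized_2cocycle \<sigma> \<longrightarrow> decaying \<sigma> (\<lambda>g. (1 + L g) powr s0)))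
       \<and> (subexp_H_growth L \<longrightarrow>
            (\<forall>a>1. \<forall>\<sigma>. normalized_2cocycle \<sigma> \<longrightarrow> decaying \<sigma> (\<lambda>g. a powr L g)))"
  using decaying_if_poly_H_growth[OF assms(3)[rule_format] assms(4)]
    decaying_if_subexp_H_growth[OF assms(3)[rule_format] assms(4)]
  by blast

end
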